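(* Let $G$ be the two-player game with $A_1=\{\text{Faithful},\text{Philandering}\}$, $A_2=\{\text{Coy},\text{Fast}\}$ and fitness vectors $\pi(\text{Faithful},\text{Coy})=(2,2)$, $\pi(\text{Faithful},\text{Fast})=(5,5)$, $\pi(\text{Philandering},\text{Coy})=(0,0)$, $\pi(\text{Philandering},\text{Fast})=(15,-5)$. Then the pure strategy profile $(\text{Faithful},\text{Fast})$ is stable under perfect observability.
   Context: Preference types: $\Theta=\mathbb{R}^A$, $A=A_1\times A_2$ (utility functions on $A$, extended bilinearly to mixed profiles). $\mathcal{M}(\Theta^2)$ is the set of product distributions $\mu=\mu_1\times\mu_2$ on $\Theta^2$ with finitely supported marginals; $\operatorname{supp}\mu=\operatorname{supp}\mu_1\times\operatorname{supp}\mu_2$, $\mu_{-i}=\mu_j$ ($j\neq i$). Mutants: for nonempty $J\subseteq\{1,2\}$, a mutant sub-profile is $\tilde\theta_J\in\prod_{j\in J}(\Theta\setminus\operatorname{supp}\mu_j)$ with shares $\varepsilon\in(0,1)^{|J|}$, $\|\varepsilon\|=\max_j\varepsilon_j$; post-entry $\tilde\mu^\varepsilon_i=(1-\varepsilon_i)\mu_i+\varepsilon_i\delta_{\tilde\theta_i}$ for $i\in J$, $\tilde\mu^\varepsilon_i=\mu_i$ otherwise. Perfect observability: an equilibrium is a map $b:\operatorname{supp}\mu\to\Delta(A_1)\times\Delta(A_2)$ such that each $b(\theta)$ is a Nash equilibrium of the game with payoffs $\theta_1,\theta_2$; $B_1(\mu)$ is the set of these; $(\mu,b)$ is a configuration,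 with aggregate outcome $\varphi_{\mu,b}(a)=\sum_{\theta}\mu(\theta)\prod_i b_i(\theta)(a_i)$. Average fitness $\Pi_{\theta_i}(\mu;b)=\sum_{\theta'_{-i}}\mu_{-i}(\theta'_{-i})\pi_i(b(\theta_i,\theta'_{-i}))$. Balanced: equal average fitness of all types within each population. Focal set $B_1(\tilde\mu^\varepsilon;b)=\{\tilde b\in B_1(\tilde\mu^\varepsilon):\tilde b=b\text{ on }\operatorname{supp}\mu\}$. $(\mu,b)$ is stable if balanced and for every nonempty $J$ and every $\tilde\theta_J$ there is $\bar\epsilon\in(0,1)$ such that for all $\varepsilon$ with $\|\varepsilon\|<\bar\epsilon$ and all $\tilde b$ in the focal set, either (i) some $j\in J$ has $\Pi_{\theta_j}(\tilde\mu^\varepsilon;\tilde b)>\Pi_{\tilde\theta_j}(\tilde\mu^\varepsilon;\tilde b)$ for all $\theta_j\in\operatorname{supp}\mu_j$, or (ii) for every $i$ all types in $\operatorname{supp}\tilde\mu^\varepsilon_i$ have equal average fitness. A profile $\sigma$ is stable if $\varphi_\sigma(a)=\prod_i\sigma_i(a_i)$ is the aggregate outcome of a stable configuration. *)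

theory Defs
  imports Complex_Main
begin

text \<open>Players are indexed 1 and 2 (naturals).\<close>

type_synonym ('a1, 'a2) ptype = "'a1 \<times> 'a2 \<Rightarrow> real"
type_synonym ('a1, 'a2) pdist = "('a1, 'a2) ptype \<Rightarrow> real"
type_synonym ('a1, 'a2) pop = "nat \<Rightarrow> ('a1, 'a2) pdist"
type_synonym ('a1, 'a2) mprof = "('a1 \<Rightarrow> real) \<times> ('a2 \<Rightarrow> real)"
type_synonym ('a1, 'a2) behav = "('a1, 'a2) ptype \<times> ('a1, 'a2) ptype \<Rightarrow> ('a1, 'a2) mprof"

definition is_mixed :: "('a::finite \<Rightarrow> real) \<Rightarrow> bool" where
  "is_mixed s \<longleftrightarrow> (\<forall>a. 0 \<le> s a) \<and> sum s UNIV = 1"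

definition U :: "('a1::finite \<times> 'a2::finite \<Rightarrow> real) \<Rightarrow> ('a1 \<Rightarrow> real) \<Rightarrow> ('a2 \<Rightarrow> real) \<Rightarrow> real" where
  "U u s1 s2 = (\<Sum>a1\<in>UNIV. \<Sum>a2\<in>UNIV. s1 a1 * s2 a2 * u (a1, a2))"

definition nash :: "('a1::finite, 'a2::finite) ptype \<Rightarrow> ('a1, 'a2) ptype \<Rightarrow> ('a1, 'a2) mprof \<Rightarrow> bool" where
  "nash th1 th2 s \<longleftrightarrow> is_mixed (fst s) \<and> is_mixed (snd s) \<and>
     (\<forall>t1. is_mixed t1 \<longrightarrow> U th1 t1 (snd s) \<le> U th1 (fst s) (snd s)) \<and>
     (\<forall>t2. is_mixed t2 \<longrightarrow> U th2 (fst s) t2 \<le> U th2 (fst s) (snd s))"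

definition supp :: "('a1, 'a2) pdist \<Rightarrow> ('a1, 'a2) ptype set" where
  "supp d = {th. 0 < d th}"

definition valid_dist :: "('a1, 'a2) pdist \<Rightarrow> bool" where
  "valid_dist d \<longleftrightarrow> (\<forall>th. 0 \<le> d th) \<and> finite (supp d) \<and> sum d (supp d) = 1"

text \<open>mu in M(Theta^2): product of two finitely supported marginals mu 1, mu 2.\<close>
definition valid_pop :: "('a1, 'a2) pop \<Rightarrow> bool" where
  "valid_pop mu \<longleftrightarrow> valid_dist (mu 1) \<and> valid_dist (mu 2)"

text \<open>b in B_1(mu): at each type pair in supp mu, b gives a Nash equilibrium of
the game with payoffs th1, th2. Values of b outside supp mu are irrelevant.\<close>
definition is_equilibrium :: "('a1::finite, 'a2::finite) pop \<Rightarrow> ('a1, 'a2) behav \<Rightarrow> bool" where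
  "is_equilibrium mu b \<longleftrightarrow>
     (\<forall>th1\<in>supp (mu 1). \<forall>th2\<in>supp (mu 2). nash th1 th2 (b (th1, th2)))"

definition fit :: "('a1::finite \<times> 'a2::finite \<Rightarrow> real \<times> real) \<Rightarrow> nat \<Rightarrow> ('a1, 'a2) mprof \<Rightarrow> real" where
  "fit g i s = (if i = 1 then U (\<lambda>a. fst (g a)) (fst s) (snd s)
                          else U (\<lambda>a. snd (g a)) (fst s) (snd s))"

definition avg_fit :: "('a1::finite \<times> 'a2::finite \<Rightarrow> real \<times> real) \<Rightarrow> ('a1, 'a2) pop \<Rightarrow> ('a1, 'a2) behav
     \<Rightarrow> nat \<Rightarrow> ('a1, 'a2) ptype \<Rightarrow> real" where
  "avg_fit g mu b i th =
     (if i = 1 then (\<Sum>th2\<in>supp (mu 2). mu 2 th2 * fit g 1 (b (th, th2)))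
      else (\<Sum>th1\<in>supp (mu 1). mu 1 th1 * fit g 2 (b (th1, th))))"

definition balanced :: "('a1::finite \<times> 'a2::finite \<Rightarrow> real \<times> real) \<Rightarrow> ('a1, 'a2) pop \<Rightarrow> ('a1, 'a2) behav \<Rightarrow> bool" where
  "balanced g mu b \<longleftrightarrow>
     (\<forall>i\<in>{1,2}. \<forall>th\<in>supp (mu i). \<forall>th'\<in>supp (mu i). avg_fit g mu b i th = avg_fit g mu b i th')"

definition post_entry :: "('a1, 'a2) pop \<Rightarrow> nat set \<Rightarrow> (nat \<Rightarrow> ('a1, 'a2) ptype) \<Rightarrow> (nat \<Rightarrow> real) \<Rightarrow> ('a1, 'a2) pop" where
  "post_entry mu J thm eps = (\<lambda>i. if i \<in> J
       then (\<lambda>th. (1 - eps i) * mu i th + eps i * (if th = thm i then 1 else 0))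
       else mu i)"

definition focal :: "('a1::finite, 'a2::finite) pop \<Rightarrow> ('a1, 'a2) pop \<Rightarrow> ('a1, 'a2) behav \<Rightarrow> ('a1, 'a2) behav \<Rightarrow> bool" where
  "focal mu mu' b bt \<longleftrightarrow> is_equilibrium mu' bt \<and>
     (\<forall>th1\<in>supp (mu 1). \<forall>th2\<in>supp (mu 2). bt (th1, th2) = b (th1, th2))"

definition stable_config :: "('a1::finite \<times> 'a2::finite \<Rightarrow> real \<times> real) \<Rightarrow> ('a1, 'a2) pop \<Rightarrow> ('a1, 'a2) behav \<Rightarrow> bool" where
  "stable_config g mu b \<longleftrightarrow>
     valid_pop mu \<and> is_equilibrium mu b \<and> balanced g mu b \<and>
     (\<forall>J thm. J \<subseteq> {1,2} \<and> J \<noteq> {} \<and> (\<forall>j\<in>J. thm j \<notin> supp (mu j)) \<longrightarrow>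
        (\<exists>ebar. 0 < ebar \<and> ebar < 1 \<and>
          (\<forall>eps. (\<forall>j\<in>J. 0 < eps j \<and> eps j < 1) \<and> Max (eps ` J) < ebar \<longrightarrow>
             (\<forall>bt. focal mu (post_entry mu J thm eps) b bt \<longrightarrow>
                (\<exists>j\<in>J. \<forall>th\<in>supp (mu j).
                    avg_fit g (post_entry mu J thm eps) bt j th
                      > avg_fit g (post_entry mu J thm eps) bt j (thm j))
                \<or> (\<forall>i\<in>{1,2}. \<forall>th\<in>supp (post_entry mu J thm eps i).
                     \<forall>th'\<in>supp (post_entry mu J thm eps i).
                     avg_fit g (post_entry mu J thm eps) bt i th
                       = avg_fit g (post_entry mu J thm eps) bt i th')))))"

definition outcome :: "('a1::finite, 'a2::finite) pop \<Rightarrow> ('a1, 'a2) behav \<Rightarrow> 'a1 \<times> 'a2 \<Rightarrow> real" where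
  "outcome mu b a = (\<Sum>th\<in>supp (mu 1) \<times> supp (mu 2).
      mu 1 (fst th) * mu 2 (snd th) * fst (b th) (fst a) * snd (b th) (snd a))"

definition stable_profile :: "('a1::finite \<times> 'a2::finite \<Rightarrow> real \<times> real) \<Rightarrow> ('a1 \<Rightarrow> real) \<Rightarrow> ('a2 \<Rightarrow> real) \<Rightarrow> bool" where
  "stable_profile g s1 s2 \<longleftrightarrow>
     (\<exists>mu b. stable_config g mu b \<and> (\<forall>a1 a2. outcome mu b (a1, a2) = s1 a1 * s2 a2))"

datatype A1 = Faithful | Philandering
datatype A2 = Coy | Fast

lemma UNIV_A1: "(UNIV :: A1 set) = {Faithful, Philandering}"
  using A1.exhaust by auto
lemma UNIV_A2: "(UNIV :: A2 set) = {Coy, Fast}"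
  using A2.exhaust by auto

instance A1 :: finite by standard (simp add: UNIV_A1)
instance A2 :: finite by standard (simp add: UNIV_A2)

fun courtship :: "A1 \<times> A2 \<Rightarrow> real \<times> real" where
  "courtship (Faithful, Coy) = (2, 2)"
| "courtship (Faithful, Fast) = (5, 5)"
| "courtship (Philandering, Coy) = (0, 0)"
| "courtship (Philandering, Fast) = (15, -5)"

end

theory Submission
  imports Defs
begin

text \<open>Let the incumbents be a player-1 type for whom Faithful is strictly dominant and a player-2
  type who only cares about playing Coy against Philandering, matched at (Faithful, Fast) with
  fitness 5 each. In every equilibrium involving an incumbent the cell (Philandering, Fast) has
  probability zero, so both players receive the same fitness, at most 5; hence a lone mutant never
  beats the incumbent's 5. When mutants enter both populations, player 2's fitness is at most 5 and
  the total at most 10 in every profile; for small shares, a linear estimate then shows that if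
  neither mutant does strictly worse than its incumbent, all fitnesses involved equal 5 and the
  post-entry configuration is balanced.\<close>

definition mono_pop :: "(nat \<Rightarrow> ('a1, 'a2) ptype) \<Rightarrow> ('a1, 'a2) pop" where
  "mono_pop th = (\<lambda>i t. if t = th i then 1 else 0)"

lemma supp_mono_pop [simp]: "supp (mono_pop th i) = {th i}"
  by (auto simp: supp_def mono_pop_def)

lemma valid_pop_mono_pop: "valid_pop (mono_pop th)"
  by (simp add: valid_pop_def valid_dist_def) (simp add: mono_pop_def)

lemma post_entry_mono_pop:
  "post_entry (mono_pop th) J mt eps i t =
     (if i \<in> J then (1 - eps i) * (if t = th i then 1 else 0) + eps i * (if t = mt i then 1 else 0)
      else if t = th i then 1 else 0)"
  by (simp add: post_entry_def mono_pop_def)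

context
  fixes th mt :: "nat \<Rightarrow> ('a1::finite, 'a2::finite) ptype" and J :: "nat set" and eps :: "nat \<Rightarrow> real"
  assumes entry: "\<forall>j\<in>J. 0 < eps j \<and> eps j < 1 \<and> mt j \<noteq> th j"
begin

lemma supp_post_entry_mono_pop:
  "supp (post_entry (mono_pop th) J mt eps i) = (if i \<in> J then {th i, mt i} else {th i})"
  using entry by (auto simp: supp_def post_entry_mono_pop split: if_splits)

lemma avg_fit_post_entry_mono_pop_1:
  "avg_fit g (post_entry (mono_pop th) J mt eps) bt 1 t =
     (if 2 \<in> J then (1 - eps 2) * fit g 1 (bt (t, th 2)) + eps 2 * fit g 1 (bt (t, mt 2))
      else fit g 1 (bt (t, th 2)))"
  using entry by (cases "2 \<in> J") (auto simp: avg_fit_def supp_post_entry_mono_pop post_entry_mono_pop)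

lemma avg_fit_post_entry_mono_pop_2:
  "avg_fit g (post_entry (mono_pop th) J mt eps) bt 2 t =
     (if 1 \<in> J then (1 - eps 1) * fit g 2 (bt (th 1, t)) + eps 1 * fit g 2 (bt (mt 1, t))
      else fit g 2 (bt (th 1, t)))"
  using entry by (cases "1 \<in> J") (auto simp: avg_fit_def supp_post_entry_mono_pop post_entry_mono_pop)

lemma balanced_post_entry_mono_pop_iff:
  "balanced g (post_entry (mono_pop th) J mt eps) bt \<longleftrightarrow>
     (\<forall>j\<in>J \<inter> {1, 2}. avg_fit g (post_entry (mono_pop th) J mt eps) bt j (mt j)
                    = avg_fit g (post_entry (mono_pop th) J mt eps) bt j (th j))"
  by (auto simp: balanced_def supp_post_entry_mono_pop)

end

lemma stable_config_mono_pop: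
  fixes th :: "nat \<Rightarrow> ('a1::finite, 'a2::finite) ptype"
  assumes "nash (th 1) (th 2) (b (th 1, th 2))" and "0 < ebar" "ebar < 1"
    and repelled: "\<And>J mt eps bt. J \<subseteq> {1, 2} \<Longrightarrow> J \<noteq> {} \<Longrightarrow>
      \<forall>j\<in>J. 0 < eps j \<and> eps j < ebar \<and> mt j \<noteq> th j \<Longrightarrow>
      focal (mono_pop th) (post_entry (mono_pop th) J mt eps) b bt \<Longrightarrow>
      (\<exists>j\<in>J. avg_fit g (post_entry (mono_pop th) J mt eps) bt j (mt j)
              < avg_fit g (post_entry (mono_pop th) J mt eps) bt j (th j))
      \<or> (\<forall>j\<in>J. avg_fit g (post_entry (mono_pop th) J mt eps) bt j (mt j)
              = avg_fit g (post_entry (mono_pop th) J mt eps) bt j (th j))"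
  shows "stable_config g (mono_pop th) b"
  unfolding stable_config_def balanced_def[symmetric]
proof (intro conjI allI impI exI[of _ ebar])
  show "valid_pop (mono_pop th)"
    by (rule valid_pop_mono_pop)
  show "is_equilibrium (mono_pop th) b" "balanced g (mono_pop th) b"
    using assms(1) by (simp_all add: is_equilibrium_def balanced_def)
  fix J mt eps bt
  assume J: "J \<subseteq> {1, 2} \<and> J \<noteq> {} \<and> (\<forall>j\<in>J. mt j \<notin> supp (mono_pop th j))"
    and eps: "(\<forall>j\<in>J. 0 < eps j \<and> eps j < 1) \<and> Max (eps ` J) < ebar"
    and focal: "focal (mono_pop th) (post_entry (mono_pop th) J mt eps) b bt"
  let ?P = "post_entry (mono_pop th) J mt eps"
  have "finite J"
    using J finite_subset by blast
  then have entry: "\<forall>j\<in>J. 0 < eps j \<and> eps j < ebar \<and> mt j \<noteq> th j"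
    using J eps by (auto simp: Max_less_iff)
  with \<open>ebar < 1\<close> have "\<forall>j\<in>J. 0 < eps j \<and> eps j < 1 \<and> mt j \<noteq> th j"
    by auto
  then show "(\<exists>j\<in>J. \<forall>\<theta>\<in>supp (mono_pop th j). avg_fit g ?P bt j (mt j) < avg_fit g ?P bt j \<theta>)
      \<or> balanced g ?P bt"
    using repelled[OF _ _ entry focal] J by (auto simp: balanced_post_entry_mono_pop_iff)
qed (use assms in auto)

lemma U_courtship_game:
  "U u s1 s2 = s1 Faithful * s2 Coy * u (Faithful, Coy) + s1 Faithful * s2 Fast * u (Faithful, Fast)
     + s1 Philandering * s2 Coy * u (Philandering, Coy) + s1 Philandering * s2 Fast * u (Philandering, Fast)"
  unfolding U_def UNIV_A1 UNIV_A2 by simp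

lemma is_mixed_A1_iff:
  "is_mixed (s :: A1 \<Rightarrow> real) \<longleftrightarrow> 0 \<le> s Faithful \<and> 0 \<le> s Philandering \<and> s Faithful + s Philandering = 1"
  unfolding is_mixed_def UNIV_A1 by (auto, metis A1.exhaust)

lemma is_mixed_A2_iff:
  "is_mixed (s :: A2 \<Rightarrow> real) \<longleftrightarrow> 0 \<le> s Coy \<and> 0 \<le> s Fast \<and> s Coy + s Fast = 1"
  unfolding is_mixed_def UNIV_A2 by (auto, metis A2.exhaust)

lemma fit_courtship:
  "fit courtship 1 s = 2 * fst s Faithful * snd s Coy + 5 * fst s Faithful * snd s Fast
                         + 15 * fst s Philandering * snd s Fast"
  "fit courtship 2 s = 2 * fst s Faithful * snd s Coy + 5 * fst s Faithful * snd s Fast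
                         - 5 * fst s Philandering * snd s Fast"
  by (simp_all add: fit_def U_courtship_game)

lemma fit_courtship_bounds:
  assumes "is_mixed (fst s)" "is_mixed (snd s)"
  shows "fit courtship 2 s \<le> 5" "fit courtship 1 s + fit courtship 2 s \<le> 10"
proof -
  have "(fst s Faithful + fst s Philandering) * (snd s Coy + snd s Fast) = 1"
    using assms by (simp add: is_mixed_A1_iff is_mixed_A2_iff)
  moreover have "0 \<le> fst s Faithful * snd s Coy" "0 \<le> fst s Philandering * snd s Coy"
    "0 \<le> fst s Philandering * snd s Fast"
    using assms by (simp_all add: is_mixed_A1_iff is_mixed_A2_iff)
  ultimately show "fit courtship 2 s \<le> 5" "fit courtship 1 s + fit courtship 2 s \<le> 10"
    unfolding fit_courtship by (simp_all add: algebra_simps)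
qed

lemma fit_courtship_shared:
  assumes "is_mixed (fst s)" "is_mixed (snd s)" "fst s Philandering * snd s Fast = 0"
  shows "fit courtship 1 s = fit courtship 2 s" "fit courtship 1 s \<le> 5"
proof -
  have "fit courtship 1 s = fit courtship 2 s + 20 * (fst s Philandering * snd s Fast)"
    unfolding fit_courtship by simp
  then show "fit courtship 1 s = fit courtship 2 s" "fit courtship 1 s \<le> 5"
    using assms(3) fit_courtship_bounds[OF assms(1,2)] by simp_all
qed

definition faithful_pref :: "(A1, A2) ptype" where
  "faithful_pref = (\<lambda>a. if fst a = Faithful then 1 else 0)"

definition wary_pref :: "(A1, A2) ptype" where
  "wary_pref = (\<lambda>a. if a = (Philandering, Coy) then 1 else 0)"

lemma nash_faithful_pref:
  assumes "nash faithful_pref th s"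
  shows "fst s Philandering = 0"
proof -
  have "is_mixed (\<lambda>a. if a = Faithful then 1 else 0)"
    by (simp add: is_mixed_A1_iff)
  with assms have "U faithful_pref (\<lambda>a. if a = Faithful then 1 else 0) (snd s)
      \<le> U faithful_pref (fst s) (snd s)"
    by (simp add: nash_def)
  then have "snd s Coy + snd s Fast \<le> fst s Faithful * (snd s Coy + snd s Fast)"
    by (simp add: U_courtship_game faithful_pref_def algebra_simps)
  then show ?thesis
    using assms by (simp add: nash_def is_mixed_A1_iff is_mixed_A2_iff)
qed

lemma nash_wary_pref:
  assumes "nash th wary_pref s"
  shows "fst s Philandering * snd s Fast = 0"
proof -
  have "is_mixed (\<lambda>a. if a = Coy then 1 else 0)"
    by (simp add: is_mixed_A2_iff)
  with assms have "U wary_pref (fst s) (\<lambda>a. if a = Coy then 1 else 0) \<le> U wary_pref (fst s) (snd s)"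
    by (simp add: nash_def)
  then have "fst s Philandering * (snd s Coy + snd s Fast) \<le> fst s Philandering * snd s Coy"
    using assms by (simp add: U_courtship_game wary_pref_def nash_def is_mixed_A2_iff)
  moreover have "0 \<le> fst s Philandering * snd s Fast"
    using assms by (simp add: nash_def is_mixed_A1_iff is_mixed_A2_iff)
  ultimately show ?thesis
    by (simp add: algebra_simps)
qed

lemma fit_courtship_against_incumbent:
  assumes "nash th1 th2 s" "th1 = faithful_pref \<or> th2 = wary_pref"
  shows "fit courtship 1 s = fit courtship 2 s" "fit courtship 1 s \<le> 5"
proof -
  have "fst s Philandering * snd s Fast = 0"
    using assms nash_faithful_pref nash_wary_pref by fastforce
  with assms(1) show "fit courtship 1 s = fit courtship 2 s" "fit courtship 1 s \<le> 5"
    using fit_courtship_shared by (simp_all add: nash_def)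
qed

definition courtship_incumbent :: "nat \<Rightarrow> (A1, A2) ptype" where
  "courtship_incumbent i = (if i = 1 then faithful_pref else wary_pref)"

definition faithful_fast :: "(A1, A2) behav" where
  "faithful_fast = (\<lambda>_. (\<lambda>a. if a = Faithful then 1 else 0, \<lambda>a. if a = Fast then 1 else 0))"

lemma nash_faithful_fast: "nash faithful_pref wary_pref (faithful_fast \<theta>)"
  by (auto simp: nash_def faithful_fast_def is_mixed_A1_iff is_mixed_A2_iff U_courtship_game
                 faithful_pref_def wary_pref_def)

lemma fit_faithful_fast: "fit courtship i (faithful_fast \<theta>) = 5"
  by (simp add: fit_def U_courtship_game faithful_fast_def)

text \<open>Here x and w are the common fitness of a player-1, resp. player-2, mutant matched with the
  incumbent opponent, and y, u are the fitnesses of the two mutants matched with each other.\<close>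
lemma entry_fitness_inequality:
  fixes e1 e2 x w y u :: real
  assumes e: "0 < e1" "e1 \<le> 1/2" "0 < e2" "e2 < 1/3"
    and bounds: "x \<le> 5" "w \<le> 5" "u \<le> 5" "y + u \<le> 10"
    and mutant1: "(1 - e2) * 5 + e2 * w \<le> (1 - e2) * x + e2 * y"
    and mutant2: "(1 - e1) * 5 + e1 * x \<le> (1 - e1) * w + e1 * u"
  shows "x = 5 \<and> w = 5 \<and> u = 5 \<and> y = 5"
proof -
  define a c r where "a = 5 - x" and "c = 5 - w" and "r = 5 - u"
  have nonneg: "0 \<le> a" "0 \<le> c" "0 \<le> r" and "y - 5 \<le> r"
    using bounds by (auto simp: a_def c_def r_def)
  have loss1: "(1 - e2) * a \<le> e2 * c + e2 * (y - 5)"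
    using mutant1 by (simp add: a_def c_def algebra_simps)
  have loss2: "(1 - e1) * c + e1 * r \<le> e1 * a"
    using mutant2 by (simp add: a_def c_def r_def algebra_simps)
  have "0 \<le> (1 - e1) * c" "0 \<le> e1 * r"
    using nonneg e by simp_all
  then have "e1 * r \<le> e1 * a" and "(1 - e1) * c \<le> e1 * a"
    using loss2 by linarith+
  have "r \<le> a"
    using \<open>e1 * r \<le> e1 * a\<close> e by simp
  have "e1 * a \<le> (1 - e1) * a"
    using nonneg e by (intro mult_right_mono) auto
  then have "(1 - e1) * c \<le> (1 - e1) * a"
    using \<open>(1 - e1) * c \<le> e1 * a\<close> by linarith
  then have "c \<le> a"
    using e by simp
  have "e2 * c \<le> e2 * a" "e2 * (y - 5) \<le> e2 * a"
    using \<open>c \<le> a\<close> \<open>r \<le> a\<close> \<open>y - 5 \<le> r\<close> e by (auto intro: mult_left_mono)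
  then have "(1 - 3 * e2) * a \<le> 0"
    using loss1 by (simp add: algebra_simps)
  then have "a = 0"
    using nonneg e by (simp add: mult_le_0_iff)
  with \<open>c \<le> a\<close> \<open>r \<le> a\<close> nonneg have "c = 0" "r = 0"
    by simp_all
  then have "0 \<le> e2 * (y - 5)" "y \<le> 5"
    using loss1 \<open>a = 0\<close> \<open>y - 5 \<le> r\<close> by simp_all
  then have "y = 5"
    using e by (simp add: zero_le_mult_iff)
  with \<open>a = 0\<close> \<open>c = 0\<close> \<open>r = 0\<close> show ?thesis
    by (simp add: a_def c_def r_def)
qed

lemma courtship_focal_fitness:
  fixes mt :: "nat \<Rightarrow> (A1, A2) ptype"
  assumes entry: "\<forall>j\<in>J. 0 < eps j \<and> eps j < 1 \<and> mt j \<noteq> courtship_incumbent j"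
    and focal: "focal (mono_pop courtship_incumbent) (post_entry (mono_pop courtship_incumbent) J mt eps)
                  faithful_fast bt"
  shows "fit courtship i (bt (faithful_pref, wary_pref)) = 5"
    and "1 \<in> J \<Longrightarrow> fit courtship 1 (bt (mt 1, wary_pref)) = fit courtship 2 (bt (mt 1, wary_pref))
                   \<and> fit courtship 1 (bt (mt 1, wary_pref)) \<le> 5"
    and "2 \<in> J \<Longrightarrow> fit courtship 1 (bt (faithful_pref, mt 2)) = fit courtship 2 (bt (faithful_pref, mt 2))
                   \<and> fit courtship 2 (bt (faithful_pref, mt 2)) \<le> 5"
    and "J = {1, 2} \<Longrightarrow> fit courtship 2 (bt (mt 1, mt 2)) \<le> 5
                   \<and> fit courtship 1 (bt (mt 1, mt 2)) + fit courtship 2 (bt (mt 1, mt 2)) \<le> 10"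
proof -
  have inc: "courtship_incumbent 1 = faithful_pref" "courtship_incumbent 2 = wary_pref"
    by (simp_all add: courtship_incumbent_def)
  have "supp (post_entry (mono_pop courtship_incumbent) J mt eps i)
      = (if i \<in> J then {courtship_incumbent i, mt i} else {courtship_incumbent i})" for i
    using supp_post_entry_mono_pop[OF entry] .
  then have nash: "nash t1 t2 (bt (t1, t2))"
    if "t1 \<in> insert faithful_pref (mt ` (J \<inter> {1}))" "t2 \<in> insert wary_pref (mt ` (J \<inter> {2}))" for t1 t2
    using focal that inc nash_faithful_fast by (auto simp: focal_def is_equilibrium_def)
  show "fit courtship i (bt (faithful_pref, wary_pref)) = 5"
    using focal fit_faithful_fast by (simp add: focal_def courtship_incumbent_def)
  show "1 \<in> J \<Longrightarrow> fit courtship 1 (bt (mt 1, wary_pref)) = fit courtship 2 (bt (mt 1, wary_pref))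
                   \<and> fit courtship 1 (bt (mt 1, wary_pref)) \<le> 5"
    using fit_courtship_against_incumbent[OF nash[of "mt 1" wary_pref]] by auto
  show "2 \<in> J \<Longrightarrow> fit courtship 1 (bt (faithful_pref, mt 2)) = fit courtship 2 (bt (faithful_pref, mt 2))
                   \<and> fit courtship 2 (bt (faithful_pref, mt 2)) \<le> 5"
    using fit_courtship_against_incumbent[OF nash[of faithful_pref "mt 2"]] by auto
  show "J = {1, 2} \<Longrightarrow> fit courtship 2 (bt (mt 1, mt 2)) \<le> 5
                   \<and> fit courtship 1 (bt (mt 1, mt 2)) + fit courtship 2 (bt (mt 1, mt 2)) \<le> 10"
    using nash[of "mt 1" "mt 2"] fit_courtship_bounds by (simp add: nash_def)
qed

lemma courtship_entry_repelled:
  fixes mt :: "nat \<Rightarrow> (A1, A2) ptype" and J :: "nat set" and eps :: "nat \<Rightarrow> real"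
  defines "P \<equiv> post_entry (mono_pop courtship_incumbent) J mt eps"
  assumes J: "J \<subseteq> {1, 2}" "J \<noteq> {}"
    and entry: "\<forall>j\<in>J. 0 < eps j \<and> eps j < 1/3 \<and> mt j \<noteq> courtship_incumbent j"
    and focal: "focal (mono_pop courtship_incumbent) P faithful_fast bt"
  shows "(\<exists>j\<in>J. avg_fit courtship P bt j (mt j) < avg_fit courtship P bt j (courtship_incumbent j))
       \<or> (\<forall>j\<in>J. avg_fit courtship P bt j (mt j) = avg_fit courtship P bt j (courtship_incumbent j))"
proof -
  let ?A = "avg_fit courtship P bt"
  let ?fit = "\<lambda>i t1 t2. fit courtship i (bt (t1, t2))"
  have entry': "\<forall>j\<in>J. 0 < eps j \<and> eps j < 1 \<and> mt j \<noteq> courtship_incumbent j"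
    using entry by auto
  note fitness = courtship_focal_fitness[OF entry' focal[unfolded P_def]]
  have inc: "courtship_incumbent 1 = faithful_pref" "courtship_incumbent 2 = wary_pref"
    by (simp_all add: courtship_incumbent_def)
  have A1: "?A 1 t = (if 2 \<in> J then (1 - eps 2) * ?fit 1 t wary_pref + eps 2 * ?fit 1 t (mt 2)
                      else ?fit 1 t wary_pref)" for t
    unfolding P_def using avg_fit_post_entry_mono_pop_1[OF entry'] inc by simp
  have A2: "?A 2 t = (if 1 \<in> J then (1 - eps 1) * ?fit 2 faithful_pref t + eps 1 * ?fit 2 (mt 1) t
                      else ?fit 2 faithful_pref t)" for t
    unfolding P_def using avg_fit_post_entry_mono_pop_2[OF entry'] inc by simp
  from J consider "J = {1}" | "J = {2}" | "J = {1, 2}"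
    by auto
  then show ?thesis
  proof cases
    case 1
    then show ?thesis
      using A1 fitness inc by (auto simp: less_eq_real_def)
  next
    case 2
    then show ?thesis
      using A2 fitness inc by (auto simp: less_eq_real_def)
  next
    case 3
    define x w y u where "x = ?fit 1 (mt 1) wary_pref" and "w = ?fit 2 faithful_pref (mt 2)"
      and "y = ?fit 1 (mt 1) (mt 2)" and "u = ?fit 2 (mt 1) (mt 2)"
    have "?A 1 faithful_pref = (1 - eps 2) * 5 + eps 2 * w" "?A 1 (mt 1) = (1 - eps 2) * x + eps 2 * y"
      "?A 2 wary_pref = (1 - eps 1) * 5 + eps 1 * x" "?A 2 (mt 2) = (1 - eps 1) * w + eps 1 * u"
      using A1 A2 fitness 3 by (simp_all add: x_def w_def y_def u_def)
    moreover have "x \<le> 5" "w \<le> 5" "u \<le> 5" "y + u \<le> 10"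
      using fitness 3 by (simp_all add: x_def w_def y_def u_def)
    moreover have "0 < eps 1" "eps 1 \<le> 1/2" "0 < eps 2" "eps 2 < 1/3"
      using entry 3 by auto
    ultimately show ?thesis
      using entry_fitness_inequality[of "eps 1" "eps 2" x w u y] 3 inc by fastforce
  qed
qed

theorem mainTheorem6:
  shows "stable_profile courtship
           (\<lambda>a. if a = Faithful then 1 else 0)
           (\<lambda>a. if a = Fast then 1 else 0)"
proof -
  have "stable_config courtship (mono_pop courtship_incumbent) faithful_fast"
    using courtship_entry_repelled
    by (intro stable_config_mono_pop[where ebar = "1/3"])
       (simp_all add: courtship_incumbent_def nash_faithful_fast)
  moreover have "outcome (mono_pop courtship_incumbent) faithful_fast (a1, a2)
      = (if a1 = Faithful then 1 else 0) * (if a2 = Fast then 1 else 0)" for a1 a2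
    by (simp add: outcome_def) (simp add: mono_pop_def faithful_fast_def)
  ultimately show ?thesis
    unfolding stable_profile_def by blast
qed

end
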